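(* If a set $C\subseteq\mathbb{R}^n$ is smoothly approximately convex at $\bar x\in C$, then it is uniformly approximable by geodesics (UAG) at $\bar x$. If moreover $C$ is locally closed at $\bar x$, then $C$ is super-regular and Clarke regular at $\bar x$.
   Context: $C$ is smoothly approximately convex at $\bar x$ if for every $\epsilon>0$ there is a neighborhood $W$ of $\bar x$ such that for all $x,x'\in C\cap W$ there is a map $\gamma:[0,1]\to C$, extending to a $\mathcal{C}^{(1)}$ map on an open neighborhood of $[0,1]$, with $\gamma(0)=x,\gamma(1)=x'$ and $\|\gamma'(t)-(x'-x)\|\le\epsilon\|x'-x\|$ for all $t$. $C$ is UAG at $\bar x$ if for every $\epsilon>0$ there is a neighborhood $W$ of $\bar x$ such that for all distinct $x,x'\in C\cap W$ there exist $\gamma:[0,1]\to C$ and $d\in\mathbb{R}^n\setminus\{0\}$ with $\gamma(0)=x$, $\gamma(1)=x'$ and $\|\gamma(t)-(x+td)\|\le\epsilon t\|d\|$ for all $t\in[0,1]$. $C$ is locally closed at $\bar x$ if $C\cap\overline B$ is closed for some closed ball $\overline B$ centered at $\bar x$. Regular normal cone: $\widehat N_C(\bar x)=\{v:\langle v,x-\bar x\rangle\le o(\|x-\bar x\|),\ x\in C\}$; normal cone $N_C(\bar x)$: all limits of $v_k\in\widehat N_C(x_k)$ with $x_k\in C$, $x_k\to\bar x$. $C$ is Clarke regular at $\bar x$ if it is locally closed there and $N_C(\bar x)=\widehat N_C(\bar x)$. $C$ is super-regular at $\bar x$ if it is locally closed there and for every $\epsilon>0$ there is a neighborhood $W$ of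 $\bar x$ with $\langle v,x'-x\rangle\le\epsilon\|v\|\|x'-x\|$ for all $x,x'\in C\cap W$ and $v\in N_C(x)$. *)

theory Defs
  imports "HOL-Analysis.Analysis"
begin

text \<open>Neighborhoods of xbar are taken to be open sets containing xbar (equivalent
  for the "there is a neighborhood" quantifiers used below).\<close>

definition smoothly_approx_convex :: "'a::euclidean_space set \<Rightarrow> 'a \<Rightarrow> bool" where
  "smoothly_approx_convex C xbar \<longleftrightarrow>
    (\<forall>\<epsilon>>0. \<exists>W. open W \<and> xbar \<in> W \<and>
      (\<forall>x\<in>C \<inter> W. \<forall>x'\<in>C \<inter> W. \<exists>\<gamma> :: real \<Rightarrow> 'a.
         (\<forall>t\<in>{0..1}. \<gamma> t \<in> C) \<and> \<gamma> 0 = x \<and> \<gamma> 1 = x' \<and>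
         (\<exists>U \<gamma>'. open U \<and> {0..1} \<subseteq> U \<and>
            (\<forall>t\<in>U. (\<gamma> has_vector_derivative \<gamma>' t) (at t)) \<and> continuous_on U \<gamma>' \<and>
            (\<forall>t\<in>{0..1}. norm (\<gamma>' t - (x' - x)) \<le> \<epsilon> * norm (x' - x)))))"

definition UAG :: "'a::euclidean_space set \<Rightarrow> 'a \<Rightarrow> bool" where
  "UAG C xbar \<longleftrightarrow>
    (\<forall>\<epsilon>>0. \<exists>W. open W \<and> xbar \<in> W \<and>
      (\<forall>x\<in>C \<inter> W. \<forall>x'\<in>C \<inter> W. x \<noteq> x' \<longrightarrow>
         (\<exists>(\<gamma> :: real \<Rightarrow> 'a) d. (\<forall>t\<in>{0..1}. \<gamma> t \<in> C) \<and> d \<noteq> 0 \<and>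
            \<gamma> 0 = x \<and> \<gamma> 1 = x' \<and>
            (\<forall>t\<in>{0..1}. norm (\<gamma> t - (x + t *\<^sub>R d)) \<le> \<epsilon> * t * norm d))))"

definition locally_closed_at :: "'a::euclidean_space set \<Rightarrow> 'a \<Rightarrow> bool" where
  "locally_closed_at C xbar \<longleftrightarrow> (\<exists>r>0. closed (C \<inter> cball xbar r))"

definition regular_normal_cone :: "'a::euclidean_space set \<Rightarrow> 'a \<Rightarrow> 'a set" where
  "regular_normal_cone C xbar =
    {v. \<forall>\<epsilon>>0. \<exists>\<delta>>0. \<forall>x\<in>C. norm (x - xbar) < \<delta> \<longrightarrow>
          v \<bullet> (x - xbar) \<le> \<epsilon> * norm (x - xbar)}"

definition normal_cone :: "'a::euclidean_space set \<Rightarrow> 'a \<Rightarrow> 'a set" where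
  "normal_cone C xbar =
    {v. \<exists>xs vs. (\<forall>k. xs k \<in> C) \<and> xs \<longlonglongrightarrow> xbar \<and>
          (\<forall>k. vs k \<in> regular_normal_cone C (xs k)) \<and> vs \<longlonglongrightarrow> v}"

definition clarke_regular :: "'a::euclidean_space set \<Rightarrow> 'a \<Rightarrow> bool" where
  "clarke_regular C xbar \<longleftrightarrow>
    locally_closed_at C xbar \<and> normal_cone C xbar = regular_normal_cone C xbar"

definition super_regular :: "'a::euclidean_space set \<Rightarrow> 'a \<Rightarrow> bool" where
  "super_regular C xbar \<longleftrightarrow> locally_closed_at C xbar \<and>
    (\<forall>\<epsilon>>0. \<exists>W. open W \<and> xbar \<in> W \<and>
      (\<forall>x\<in>C \<inter> W. \<forall>x'\<in>C \<inter> W. \<forall>v\<in>normal_cone C x.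
         v \<bullet> (x' - x) \<le> \<epsilon> * norm v * norm (x' - x)))"

end

theory Submission
  imports Defs
begin

(* Integrating the estimate |gamma' t - (x' - x)| <= eps |x' - x| shows that the smooth curves of
   the hypothesis stay within eps t |x' - x| of the segment x + t (x' - x); with d = x' - x this is
   UAG. Testing a regular normal v at x along such a curve and letting t -> 0 gives
   <v, x' - x> <= eps |v| |x' - x| for all x, x' near xbar, and this inequality passes to limits
   of regular normals: C is super-regular. Taking x = xbar, every limiting normal at xbar satisfies
   the defining inequality of a regular normal, so C is Clarke regular. *)

lemma norm_deviation_from_line_le:
  fixes \<gamma> \<gamma>' :: "real \<Rightarrow> 'a::real_normed_vector"
  assumes der: "\<And>s. s \<in> {0..1} \<Longrightarrow> (\<gamma> has_vector_derivative \<gamma>' s) (at s)"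
    and bound: "\<And>s. s \<in> {0..1} \<Longrightarrow> norm (\<gamma>' s - d) \<le> B"
    and t: "t \<in> {0..1}"
  shows "norm (\<gamma> t - (\<gamma> 0 + t *\<^sub>R d)) \<le> B * t"
proof (cases "t = 0")
  case False
  define f where "f s = \<gamma> s - s *\<^sub>R d" for s
  have f_der: "(f has_vector_derivative \<gamma>' s - d) (at s)" if "s \<in> {0..1}" for s
    unfolding f_def using der[OF that] by (auto intro!: derivative_eq_intros)
  have "norm (f t - f 0) \<le> B * t - B * 0"
  proof (rule differentiable_bound_general[where f' = "\<lambda>s. \<gamma>' s - d" and \<phi>' = "\<lambda>_. B"])
    show "continuous_on {0..t} f"
      using t
      by (intro continuous_at_imp_continuous_on ballI has_vector_derivative_continuous[OF f_der]) auto
  qed (use False t f_der bound in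
      \<open>auto intro!: derivative_eq_intros continuous_on_mult_left continuous_on_id\<close>)
  then show ?thesis
    unfolding f_def by (simp add: algebra_simps)
qed simp

lemma smoothly_approx_convex_imp_near_segment_curves:
  assumes "smoothly_approx_convex C xbar" "\<epsilon> > 0"
  shows "\<exists>W. open W \<and> xbar \<in> W \<and> (\<forall>x\<in>C \<inter> W. \<forall>x'\<in>C \<inter> W. \<exists>\<gamma>.
    (\<forall>t\<in>{0..1}. \<gamma> t \<in> C) \<and> \<gamma> 0 = x \<and> \<gamma> 1 = x' \<and>
    (\<forall>t\<in>{0..1}. norm (\<gamma> t - (x + t *\<^sub>R (x' - x))) \<le> \<epsilon> * t * norm (x' - x)))"
proof -
  obtain W where W: "open W" "xbar \<in> W" and smooth_curves: "\<forall>x\<in>C \<inter> W. \<forall>x'\<in>C \<inter> W. \<exists>\<gamma>.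
      (\<forall>t\<in>{0..1}. \<gamma> t \<in> C) \<and> \<gamma> 0 = x \<and> \<gamma> 1 = x' \<and>
      (\<exists>U \<gamma>'. open U \<and> {0..1} \<subseteq> U \<and> (\<forall>t\<in>U. (\<gamma> has_vector_derivative \<gamma>' t) (at t)) \<and>
         continuous_on U \<gamma>' \<and> (\<forall>t\<in>{0..1}. norm (\<gamma>' t - (x' - x)) \<le> \<epsilon> * norm (x' - x)))"
    using assms(1)[unfolded smoothly_approx_convex_def, rule_format, OF assms(2)]
    by (elim exE conjE) (rule that)
  have "\<exists>\<gamma>. (\<forall>t\<in>{0..1}. \<gamma> t \<in> C) \<and> \<gamma> 0 = x \<and> \<gamma> 1 = x' \<and>
      (\<forall>t\<in>{0..1}. norm (\<gamma> t - (x + t *\<^sub>R (x' - x))) \<le> \<epsilon> * t * norm (x' - x))"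
    if x: "x \<in> C \<inter> W" and x': "x' \<in> C \<inter> W" for x x'
  proof -
    obtain \<gamma> where \<gamma>: "\<forall>t\<in>{0..1}. \<gamma> t \<in> C" "\<gamma> 0 = x" "\<gamma> 1 = x'"
      and "\<exists>U \<gamma>'. open U \<and> {0..1} \<subseteq> U \<and> (\<forall>t\<in>U. (\<gamma> has_vector_derivative \<gamma>' t) (at t)) \<and>
         continuous_on U \<gamma>' \<and> (\<forall>t\<in>{0..1}. norm (\<gamma>' t - (x' - x)) \<le> \<epsilon> * norm (x' - x))"
      using smooth_curves[rule_format, OF x x'] by blast
    then obtain \<gamma>' U where "{0..1} \<subseteq> U" and "\<forall>t\<in>U. (\<gamma> has_vector_derivative \<gamma>' t) (at t)"
      and "\<forall>t\<in>{0..1}. norm (\<gamma>' t - (x' - x)) \<le> \<epsilon> * norm (x' - x)"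
      by (elim exE conjE) (rule that)
    then have "norm (\<gamma> t - (x + t *\<^sub>R (x' - x))) \<le> \<epsilon> * norm (x' - x) * t" if "t \<in> {0..1}" for t
      using norm_deviation_from_line_le[of \<gamma> \<gamma>' "x' - x", OF _ _ that] \<gamma>(2) by blast
    with \<gamma> show ?thesis by (intro exI[of _ \<gamma>]) (simp add: mult_ac)
  qed
  with W show ?thesis by (intro exI[of _ W]) simp
qed

lemma smoothly_approx_convex_imp_UAG:
  assumes "smoothly_approx_convex C xbar"
  shows "UAG C xbar"
  unfolding UAG_def
proof (intro allI impI)
  fix \<epsilon> :: real assume "\<epsilon> > 0"
  obtain W where W: "open W" "xbar \<in> W" and curves: "\<forall>x\<in>C \<inter> W. \<forall>x'\<in>C \<inter> W. \<exists>\<gamma>.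
      (\<forall>t\<in>{0..1}. \<gamma> t \<in> C) \<and> \<gamma> 0 = x \<and> \<gamma> 1 = x' \<and>
      (\<forall>t\<in>{0..1}. norm (\<gamma> t - (x + t *\<^sub>R (x' - x))) \<le> \<epsilon> * t * norm (x' - x))"
    using smoothly_approx_convex_imp_near_segment_curves[OF assms \<open>\<epsilon> > 0\<close>]
    by (elim exE conjE) (rule that)
  have "\<exists>\<gamma> d. (\<forall>t\<in>{0..1}. \<gamma> t \<in> C) \<and> d \<noteq> 0 \<and> \<gamma> 0 = x \<and> \<gamma> 1 = x' \<and>
      (\<forall>t\<in>{0..1}. norm (\<gamma> t - (x + t *\<^sub>R d)) \<le> \<epsilon> * t * norm d)"
    if x: "x \<in> C \<inter> W" and x': "x' \<in> C \<inter> W" and "x \<noteq> x'" for x x'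
    using curves[rule_format, OF x x'] \<open>x \<noteq> x'\<close>
    by (subst ex_comm, intro exI[of _ "x' - x"]) auto
  with W show "\<exists>W. open W \<and> xbar \<in> W \<and> (\<forall>x\<in>C \<inter> W. \<forall>x'\<in>C \<inter> W. x \<noteq> x' \<longrightarrow>
      (\<exists>\<gamma> d. (\<forall>t\<in>{0..1}. \<gamma> t \<in> C) \<and> d \<noteq> 0 \<and> \<gamma> 0 = x \<and> \<gamma> 1 = x' \<and>
         (\<forall>t\<in>{0..1}. norm (\<gamma> t - (x + t *\<^sub>R d)) \<le> \<epsilon> * t * norm d)))"
    by (intro exI[of _ W]) simp
qed

lemma regular_normal_cone_inner_le_along_curve:
  fixes \<gamma> :: "real \<Rightarrow> 'a::euclidean_space"
  assumes v: "v \<in> regular_normal_cone C x"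
    and in_C: "\<forall>t\<in>{0..1}. \<gamma> t \<in> C"
    and near: "\<forall>t\<in>{0..1}. norm (\<gamma> t - (x + t *\<^sub>R d)) \<le> e * t * norm d"
    and "0 \<le> e"
  shows "v \<bullet> d \<le> e * norm v * norm d"
proof (rule field_le_epsilon)
  fix \<eta> :: real assume "\<eta> > 0"
  \<comment> \<open>the summand 1 keeps \<open>c\<close> positive when \<open>d = 0\<close>\<close>
  define c where "c = (1 + e) * norm d + 1"
  have "c > 0"
    unfolding c_def using \<open>0 \<le> e\<close> by (simp add: add_nonneg_pos)
  have dist_le: "norm (\<gamma> t - x) \<le> t * c" if "t \<in> {0..1}" for t
  proof -
    have "norm (\<gamma> t - x) \<le> norm (t *\<^sub>R d) + norm (\<gamma> t - (x + t *\<^sub>R d))"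
      using norm_triangle_ineq[of "t *\<^sub>R d" "\<gamma> t - (x + t *\<^sub>R d)"] by simp
    also have "\<dots> \<le> t * norm d + e * t * norm d"
      using near that by simp
    also have "\<dots> \<le> t * c"
      using that unfolding c_def by (simp add: algebra_simps)
    finally show ?thesis .
  qed
  have lower: "t * (v \<bullet> d - e * norm v * norm d) \<le> v \<bullet> (\<gamma> t - x)" if "t \<in> {0..1}" for t
  proof -
    have "v \<bullet> (x + t *\<^sub>R d - \<gamma> t) \<le> norm v * norm (\<gamma> t - (x + t *\<^sub>R d))"
      using norm_cauchy_schwarz[of v "x + t *\<^sub>R d - \<gamma> t"] by (simp add: norm_minus_commute)
    also have "\<dots> \<le> norm v * (e * t * norm d)"
      using near that by (simp add: mult_left_mono)
    finally show ?thesis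
      by (simp add: inner_diff_right inner_add_right algebra_simps)
  qed
  have "\<eta> / c > 0"
    using \<open>\<eta> > 0\<close> \<open>c > 0\<close> by simp
  then obtain \<delta> where "\<delta> > 0"
    and \<delta>: "\<forall>y\<in>C. norm (y - x) < \<delta> \<longrightarrow> v \<bullet> (y - x) \<le> \<eta> / c * norm (y - x)"
    using v unfolding regular_normal_cone_def by blast
  have "((\<lambda>t. t * c) \<longlongrightarrow> 0) (at_right 0)"
    by (auto intro!: tendsto_eq_intros)
  then have "\<forall>\<^sub>F t in at_right 0. t \<in> {0<..<1} \<and> t * c < \<delta>"
    by (intro eventually_conj eventually_at_right_real order_tendstoD(2)[OF _ \<open>\<delta> > 0\<close>]) simp_all
  then obtain t where t: "t \<in> {0<..<1}" "t * c < \<delta>"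
    using eventually_happens'[OF trivial_limit_at_right_real] by blast
  then have "norm (\<gamma> t - x) < \<delta>" "\<gamma> t \<in> C"
    using dist_le[of t] in_C by auto
  then have "t * (v \<bullet> d - e * norm v * norm d) \<le> \<eta> / c * norm (\<gamma> t - x)"
    using lower[of t] \<delta> t by fastforce
  also have "\<dots> \<le> \<eta> / c * (t * c)"
    using dist_le[of t] t \<open>\<eta> > 0\<close> \<open>c > 0\<close> by (intro mult_left_mono) auto
  also have "\<dots> = t * \<eta>"
    using \<open>c > 0\<close> by simp
  finally have "t * (v \<bullet> d - e * norm v * norm d) \<le> t * \<eta>" .
  then show "v \<bullet> d \<le> e * norm v * norm d + \<eta>"
    using t by (simp add: mult_le_cancel_left_pos)
qed

lemma normal_cone_inner_le_of_regular_normal_cone: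
  assumes "open W" "x \<in> W" "v \<in> normal_cone C x"
    and regular: "\<And>y w. y \<in> C \<inter> W \<Longrightarrow> w \<in> regular_normal_cone C y \<Longrightarrow>
      w \<bullet> (x' - y) \<le> e * norm w * norm (x' - y)"
  shows "v \<bullet> (x' - x) \<le> e * norm v * norm (x' - x)"
proof -
  obtain xs vs where xs: "\<forall>k. xs k \<in> C" "xs \<longlonglongrightarrow> x"
    and vs: "\<forall>k. vs k \<in> regular_normal_cone C (xs k)" "vs \<longlonglongrightarrow> v"
    using \<open>v \<in> normal_cone C x\<close> unfolding normal_cone_def by blast
  have "\<forall>\<^sub>F k in sequentially. xs k \<in> W"
    using topological_tendstoD[OF xs(2) \<open>open W\<close> \<open>x \<in> W\<close>] .
  then have ev: "\<forall>\<^sub>F k in sequentially. vs k \<bullet> (x' - xs k) - e * norm (vs k) * norm (x' - xs k) \<le> 0"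
  proof eventually_elim
    case (elim k)
    show ?case
      using regular[of "xs k" "vs k"] xs(1) vs(1) elim by simp
  qed
  have lim: "(\<lambda>k. vs k \<bullet> (x' - xs k) - e * norm (vs k) * norm (x' - xs k)) \<longlonglongrightarrow>
      v \<bullet> (x' - x) - e * norm v * norm (x' - x)"
    using xs(2) vs(2) by (intro tendsto_intros)
  show ?thesis
    using tendsto_upperbound[OF lim ev] by simp
qed

lemma smoothly_approx_convex_normal_cone_inner_le:
  assumes "smoothly_approx_convex C xbar" "\<epsilon> > 0"
  shows "\<exists>W. open W \<and> xbar \<in> W \<and> (\<forall>x\<in>C \<inter> W. \<forall>x'\<in>C \<inter> W. \<forall>v\<in>normal_cone C x.
    v \<bullet> (x' - x) \<le> \<epsilon> * norm v * norm (x' - x))"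
proof -
  obtain W where W: "open W" "xbar \<in> W" and curves: "\<forall>x\<in>C \<inter> W. \<forall>x'\<in>C \<inter> W. \<exists>\<gamma>.
      (\<forall>t\<in>{0..1}. \<gamma> t \<in> C) \<and> \<gamma> 0 = x \<and> \<gamma> 1 = x' \<and>
      (\<forall>t\<in>{0..1}. norm (\<gamma> t - (x + t *\<^sub>R (x' - x))) \<le> \<epsilon> * t * norm (x' - x))"
    using smoothly_approx_convex_imp_near_segment_curves[OF assms]
    by (elim exE conjE) (rule that)
  have regular: "w \<bullet> (x' - y) \<le> \<epsilon> * norm w * norm (x' - y)"
    if y: "y \<in> C \<inter> W" and x': "x' \<in> C \<inter> W" and "w \<in> regular_normal_cone C y" for y x' w
    using curves[rule_format, OF y x'] regular_normal_cone_inner_le_along_curve[OF \<open>w \<in> _\<close>]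
      \<open>\<epsilon> > 0\<close> by auto
  have "v \<bullet> (x' - x) \<le> \<epsilon> * norm v * norm (x' - x)"
    if "x \<in> C \<inter> W" "x' \<in> C \<inter> W" "v \<in> normal_cone C x" for x x' v
  proof (rule normal_cone_inner_le_of_regular_normal_cone[OF W(1) _ \<open>v \<in> _\<close>])
    show "x \<in> W"
      using that by blast
    show "w \<bullet> (x' - y) \<le> \<epsilon> * norm w * norm (x' - y)"
      if "y \<in> C \<inter> W" "w \<in> regular_normal_cone C y" for y w
      using regular that \<open>x' \<in> C \<inter> W\<close> by blast
  qed
  with W show ?thesis
    by (intro exI[of _ W]) simp
qed

lemma smoothly_approx_convex_imp_super_regular:
  assumes "smoothly_approx_convex C xbar" "locally_closed_at C xbar"
  shows "super_regular C xbar"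
  unfolding super_regular_def using assms by (simp add: smoothly_approx_convex_normal_cone_inner_le)

lemma regular_normal_cone_subset_normal_cone:
  assumes "x \<in> C"
  shows "regular_normal_cone C x \<subseteq> normal_cone C x"
  unfolding normal_cone_def using assms by force

lemma super_regular_imp_clarke_regular:
  assumes "super_regular C xbar" "xbar \<in> C"
  shows "clarke_regular C xbar"
proof -
  have "v \<in> regular_normal_cone C xbar" if v: "v \<in> normal_cone C xbar" for v
    unfolding regular_normal_cone_def
  proof (intro CollectI allI impI)
    fix \<epsilon> :: real assume "\<epsilon> > 0"
    then have "\<epsilon> / (norm v + 1) > 0"
      by (simp add: add_nonneg_pos)
    then obtain W where "open W" "xbar \<in> W"
      and super: "\<forall>x\<in>C \<inter> W. \<forall>x'\<in>C \<inter> W. \<forall>w\<in>normal_cone C x.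
        w \<bullet> (x' - x) \<le> \<epsilon> / (norm v + 1) * norm w * norm (x' - x)"
      using assms(1) unfolding super_regular_def by blast
    then obtain \<delta> where "\<delta> > 0" "ball xbar \<delta> \<subseteq> W"
      using openE by blast
    moreover have "v \<bullet> (x - xbar) \<le> \<epsilon> * norm (x - xbar)" if "x \<in> C" "x \<in> W" for x
    proof -
      have "v \<bullet> (x - xbar) \<le> \<epsilon> / (norm v + 1) * norm v * norm (x - xbar)"
        using super \<open>xbar \<in> W\<close> assms(2) v that by blast
      also have "\<dots> \<le> \<epsilon> * norm (x - xbar)"
      proof (rule mult_right_mono)
        have "\<epsilon> * norm v \<le> \<epsilon> * (norm v + 1)"
          using \<open>\<epsilon> > 0\<close> by simp
        then show "\<epsilon> / (norm v + 1) * norm v \<le> \<epsilon>"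
          by (simp add: pos_divide_le_eq add_nonneg_pos)
      qed simp
      finally show ?thesis .
    qed
    ultimately show "\<exists>\<delta>>0. \<forall>x\<in>C. norm (x - xbar) < \<delta> \<longrightarrow> v \<bullet> (x - xbar) \<le> \<epsilon> * norm (x - xbar)"
      by (auto simp: dist_norm norm_minus_commute subset_iff)
  qed
  with regular_normal_cone_subset_normal_cone[OF assms(2)] assms(1) show ?thesis
    unfolding clarke_regular_def super_regular_def by blast
qed

theorem proposition3p6:
  fixes C :: "'a::euclidean_space set" and xbar :: 'a
  assumes "xbar \<in> C"
    and "smoothly_approx_convex C xbar"
  shows "UAG C xbar \<and>
    (locally_closed_at C xbar \<longrightarrow> super_regular C xbar \<and> clarke_regular C xbar)"
proof -
  have "super_regular C xbar \<and> clarke_regular C xbar" if "locally_closed_at C xbar"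
    using smoothly_approx_convex_imp_super_regular[OF assms(2) that]
      super_regular_imp_clarke_regular[OF _ assms(1)] by simp
  with smoothly_approx_convex_imp_UAG[OF assms(2)] show ?thesis
    by simp
qed

end
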